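(* Let $\mathbb{U}$ be a monster model of CODF, $K\preceq\mathbb{U}$ a small model, and $a\in\mathbb{U}$ such that $\dim(\bar\delta^{n-1}(a)/K)=n$. Then there is $b\in\mathbb{U}$ such that $tp(\bar\delta^{n-1}(b)/K)=tp(\bar\delta^{n-1}(a)/K)$ and $\delta^k(b)=0$ for all $k\geq n$.
   Context: CODF is the theory of closed ordered differential fields (model completion of the theory of ordered fields with a derivation $\delta$, no compatibility with the order assumed); its models are real closed. $\bar\delta^{n-1}(a)=(a,\delta(a),\dots,\delta^{n-1}(a))\in\mathbb{U}^n$. $tp(\cdot/K)$ denotes the type in the ordered ring language $\{<,+,\cdot,0,1\}$, and $\dim(c/K)$ is the o-minimal (topological) dimension of $tp(c/K)$ in the real closed field $\mathbb{U}$, i.e. the minimal dimension of a semialgebraic set over $K$ containing $c$. *)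

theory Defs
  imports Main "HOL-Computational_Algebra.Polynomial"
begin

text \<open>Language {<,+,*,0,1,delta}. Variables are indexed by natural numbers;
  parameters are supplied through the valuation.\<close>

datatype tm = Var nat | Zero | One | Add tm tm | Mul tm tm | Der tm

datatype fm = Eq tm tm | Lt tm tm | Neg fm | Conj fm fm | Ex nat fm

fun eval :: "('a::linordered_field \<Rightarrow> 'a) \<Rightarrow> (nat \<Rightarrow> 'a) \<Rightarrow> tm \<Rightarrow> 'a" where
  "eval d v (Var i) = v i"
| "eval d v Zero = 0"
| "eval d v One = 1"
| "eval d v (Add s t) = eval d v s + eval d v t"
| "eval d v (Mul s t) = eval d v s * eval d v t"
| "eval d v (Der t) = d (eval d v t)"

fun sat :: "('a::linordered_field \<Rightarrow> 'a) \<Rightarrow> 'a set \<Rightarrow> fm \<Rightarrow> (nat \<Rightarrow> 'a) \<Rightarrow> bool" where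
  "sat d S (Eq s t) v = (eval d v s = eval d v t)"
| "sat d S (Lt s t) v = (eval d v s < eval d v t)"
| "sat d S (Neg p) v = (\<not> sat d S p v)"
| "sat d S (Conj p q) v = (sat d S p v \<and> sat d S q v)"
| "sat d S (Ex i p) v = (\<exists>x\<in>S. sat d S p (v(i := x)))"

fun ring_tm :: "tm \<Rightarrow> bool" where
  "ring_tm (Var i) = True"
| "ring_tm Zero = True"
| "ring_tm One = True"
| "ring_tm (Add s t) = (ring_tm s \<and> ring_tm t)"
| "ring_tm (Mul s t) = (ring_tm s \<and> ring_tm t)"
| "ring_tm (Der t) = False"

fun ring_fm :: "fm \<Rightarrow> bool" where
  "ring_fm (Eq s t) = (ring_tm s \<and> ring_tm t)"
| "ring_fm (Lt s t) = (ring_tm s \<and> ring_tm t)"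
| "ring_fm (Neg p) = ring_fm p"
| "ring_fm (Conj p q) = (ring_fm p \<and> ring_fm q)"
| "ring_fm (Ex i p) = ring_fm p"

fun tm_vars :: "tm \<Rightarrow> nat set" where
  "tm_vars (Var i) = {i}"
| "tm_vars Zero = {}"
| "tm_vars One = {}"
| "tm_vars (Add s t) = tm_vars s \<union> tm_vars t"
| "tm_vars (Mul s t) = tm_vars s \<union> tm_vars t"
| "tm_vars (Der t) = tm_vars t"

fun pderiv_tm :: "nat \<Rightarrow> tm \<Rightarrow> tm" where
  "pderiv_tm j (Var i) = (if i = j then One else Zero)"
| "pderiv_tm j Zero = Zero"
| "pderiv_tm j One = Zero"
| "pderiv_tm j (Add s t) = Add (pderiv_tm j s) (pderiv_tm j t)"
| "pderiv_tm j (Mul s t) = Add (Mul (pderiv_tm j s) t) (Mul s (pderiv_tm j t))"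
| "pderiv_tm j (Der t) = Zero"

definition derivation :: "('a::linordered_field \<Rightarrow> 'a) \<Rightarrow> bool" where
  "derivation d \<longleftrightarrow> (\<forall>x y. d (x + y) = d x + d y) \<and> (\<forall>x y. d (x * y) = x * d y + d x * y)"

definition real_closed :: "'a::linordered_field itself \<Rightarrow> bool" where
  "real_closed _ \<longleftrightarrow> (\<forall>x::'a. 0 \<le> x \<longrightarrow> (\<exists>y. y * y = x))
     \<and> (\<forall>p::'a poly. odd (degree p) \<longrightarrow> (\<exists>x. poly p x = 0))"

text \<open>Singer's scheme: for f of order n (polynomial f* in x_0..x_n, coefficients in U given as
  parameters at indices > n via c) and g_1..g_m of order < n: if there is a_0..a_n with
  f*(a)=0, (d f*/d x_n)(a) \<noteq> 0, g_i*(a) > 0, then there is y with f(y)=0 and g_i(y) > 0.\<close>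
definition CODF :: "('a::linordered_field \<Rightarrow> 'a) \<Rightarrow> bool" where
  "CODF d \<longleftrightarrow> real_closed TYPE('a) \<and> derivation d \<and>
    (\<forall>n f gs c.
       ring_tm f \<and> (\<forall>g\<in>set gs. ring_tm g \<and> n \<notin> tm_vars g) \<longrightarrow>
       (\<exists>a::nat \<Rightarrow> 'a.
          (let w = (\<lambda>i. if i \<le> n then a i else c i) in
            eval d w f = 0 \<and> eval d w (pderiv_tm n f) \<noteq> 0 \<and> (\<forall>g\<in>set gs. eval d w g > 0)))
       \<longrightarrow>
       (\<exists>y::'a.
          (let w = (\<lambda>i. if i \<le> n then (d ^^ i) y else c i) in
            eval d w f = 0 \<and> (\<forall>g\<in>set gs. eval d w g > 0))))"

definition elem_sub :: "('a::linordered_field \<Rightarrow> 'a) \<Rightarrow> 'a set \<Rightarrow> bool" where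
  "elem_sub d K \<longleftrightarrow> 0 \<in> K \<and> 1 \<in> K \<and> (\<forall>x\<in>K. \<forall>y\<in>K. x + y \<in> K \<and> x * y \<in> K) \<and> (\<forall>x\<in>K. d x \<in> K)
     \<and> (\<forall>p v. (\<forall>i. v i \<in> K) \<longrightarrow> (sat d K p v \<longleftrightarrow> sat d UNIV p v))"

definition saturated :: "('a::linordered_field \<Rightarrow> 'a) \<Rightarrow> 'k rel \<Rightarrow> bool" where
  "saturated d kappa \<longleftrightarrow> (\<forall>(A::'a set) (\<Sigma>::(fm \<times> (nat \<Rightarrow> 'a)) set).
     (card_of A, kappa) \<in> ordLess \<and> (\<forall>(p, v)\<in>\<Sigma>. \<forall>i. i \<noteq> 0 \<longrightarrow> v i \<in> A) \<and>
     (\<forall>F. finite F \<and> F \<subseteq> \<Sigma> \<longrightarrow> (\<exists>b. \<forall>(p, v)\<in>F. sat d UNIV p (v(0 := b))))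
     \<longrightarrow> (\<exists>b. \<forall>(p, v)\<in>\<Sigma>. sat d UNIV p (v(0 := b))))"

definition automorphism :: "('a::linordered_field \<Rightarrow> 'a) \<Rightarrow> ('a \<Rightarrow> 'a) \<Rightarrow> bool" where
  "automorphism d s \<longleftrightarrow> bij s \<and> s 0 = 0 \<and> s 1 = 1 \<and> (\<forall>x y. s (x + y) = s x + s y)
     \<and> (\<forall>x y. s (x * y) = s x * s y) \<and> (\<forall>x y. x < y \<longleftrightarrow> s x < s y) \<and> (\<forall>x. s (d x) = d (s x))"

definition homogeneous :: "('a::linordered_field \<Rightarrow> 'a) \<Rightarrow> 'k rel \<Rightarrow> bool" where
  "homogeneous d kappa \<longleftrightarrow> (\<forall>(A::'a set) f.
     (card_of A, kappa) \<in> ordLess \<and>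
     (\<forall>p v. (\<forall>i. v i \<in> A) \<longrightarrow> (sat d UNIV p v \<longleftrightarrow> sat d UNIV p (f \<circ> v)))
     \<longrightarrow> (\<exists>s. automorphism d s \<and> (\<forall>x\<in>A. s x = f x)))"

definition monster :: "('a::linordered_field \<Rightarrow> 'a) \<Rightarrow> 'k rel \<Rightarrow> bool" where
  "monster d kappa \<longleftrightarrow> Card_order kappa \<and> BNF_Cardinal_Arithmetic.cinfinite kappa \<and> saturated d kappa \<and> homogeneous d kappa"

definition small :: "'k rel \<Rightarrow> 'a set \<Rightarrow> bool" where
  "small kappa K \<longleftrightarrow> (card_of K, kappa) \<in> ordLess"

text \<open>n-tuples are represented as functions nat => 'a, only the coordinates < n matter.\<close>
definition jet :: "('a \<Rightarrow> 'a) \<Rightarrow> 'a \<Rightarrow> nat \<Rightarrow> 'a" where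
  "jet d a = (\<lambda>i. (d ^^ i) a)"

definition tp_eq :: "('a::linordered_field \<Rightarrow> 'a) \<Rightarrow> 'a set \<Rightarrow> nat \<Rightarrow> (nat \<Rightarrow> 'a) \<Rightarrow> (nat \<Rightarrow> 'a) \<Rightarrow> bool" where
  "tp_eq d K n c e \<longleftrightarrow> (\<forall>p v. ring_fm p \<and> (\<forall>i. v i \<in> K) \<longrightarrow>
      (sat d UNIV p (\<lambda>i. if i < n then c i else v i) \<longleftrightarrow> sat d UNIV p (\<lambda>i. if i < n then e i else v i)))"

definition sa_def :: "('a::linordered_field \<Rightarrow> 'a) \<Rightarrow> 'a set \<Rightarrow> nat \<Rightarrow> (nat \<Rightarrow> 'a) set \<Rightarrow> bool" where
  "sa_def d K n X \<longleftrightarrow> (\<exists>p v. ring_fm p \<and> (\<forall>i. v i \<in> K) \<and>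
      X = {c. sat d UNIV p (\<lambda>i. if i < n then c i else v i)})"

definition has_dim_ge :: "nat \<Rightarrow> (nat \<Rightarrow> 'a::linordered_field) set \<Rightarrow> nat \<Rightarrow> bool" where
  "has_dim_ge n X k \<longleftrightarrow> (\<exists>J. J \<subseteq> {..<n} \<and> card J = k \<and>
     (\<exists>l u. (\<forall>j\<in>J. l j < u j) \<and>
        (\<forall>y. (\<forall>j\<in>J. l j < y j \<and> y j < u j) \<longrightarrow> (\<exists>c\<in>X. \<forall>j\<in>J. c j = y j))))"

text \<open>o-minimal dimension of a (nonempty) set X \<subseteq> U^n.\<close>
definition sa_dim :: "nat \<Rightarrow> (nat \<Rightarrow> 'a::linordered_field) set \<Rightarrow> nat" where
  "sa_dim n X = Max {k. k \<le> n \<and> has_dim_ge n X k}"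

definition tp_dim :: "('a::linordered_field \<Rightarrow> 'a) \<Rightarrow> 'a set \<Rightarrow> nat \<Rightarrow> (nat \<Rightarrow> 'a) \<Rightarrow> nat" where
  "tp_dim d K n c = Min {sa_dim n X | X. sa_def d K n X \<and> c \<in> X}"

end

theory Submission
  imports Defs
begin

text \<open>Since \<open>dim(\<bar>\<delta>\<^sup>n\<^sup>-\<^sup>1(a)/K) = n\<close>, every \<open>K\<close>-definable set containing
  \<open>\<bar>\<delta>\<^sup>n\<^sup>-\<^sup>1(a)\<close> has nonempty interior, so it contains an open box. The CODF axiom scheme
  applied to \<open>f = x\<^sub>n\<close> produces, in any open box, the jet of some \<open>y\<close> with \<open>\<delta>\<^sup>n(y) = 0\<close>.
  Hence the partial type \<open>tp(\<bar>\<delta>\<^sup>n\<^sup>-\<^sup>1(a)/K)\<close> (in the jet of the variable) together with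
  \<open>\<delta>\<^sup>n(x) = 0\<close> is finitely satisfiable, and saturation of the monster model realizes it.\<close>

abbreviation sat_at :: "('a::linordered_field \<Rightarrow> 'a) \<Rightarrow> nat \<Rightarrow> fm \<Rightarrow> (nat \<Rightarrow> 'a) \<Rightarrow> (nat \<Rightarrow> 'a) \<Rightarrow> bool" where
  "sat_at d n p v c \<equiv> sat d UNIV p (\<lambda>i. if i < n then c i else v i)"

fun ren_tm :: "(nat \<Rightarrow> nat) \<Rightarrow> tm \<Rightarrow> tm" where
  "ren_tm s (Var i) = Var (s i)"
| "ren_tm s Zero = Zero"
| "ren_tm s One = One"
| "ren_tm s (Add a b) = Add (ren_tm s a) (ren_tm s b)"
| "ren_tm s (Mul a b) = Mul (ren_tm s a) (ren_tm s b)"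
| "ren_tm s (Der a) = Der (ren_tm s a)"

fun ren :: "(nat \<Rightarrow> nat) \<Rightarrow> fm \<Rightarrow> fm" where
  "ren s (Eq a b) = Eq (ren_tm s a) (ren_tm s b)"
| "ren s (Lt a b) = Lt (ren_tm s a) (ren_tm s b)"
| "ren s (Neg p) = Neg (ren s p)"
| "ren s (Conj p q) = Conj (ren s p) (ren s q)"
| "ren s (Ex i p) = Ex (s i) (ren s p)"

lemma eval_ren_tm: "eval d w (ren_tm s t) = eval d (w \<circ> s) t"
  by (induction t) auto

lemma ring_tm_ren_tm: "ring_tm (ren_tm s t) = ring_tm t"
  by (induction t) auto

lemma ring_fm_ren: "ring_fm (ren s p) = ring_fm p"
  by (induction p) (auto simp: ring_tm_ren_tm)

lemma sat_ren:
  assumes "inj s"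
  shows "sat d S (ren s p) w = sat d S p (w \<circ> s)"
proof (induction p arbitrary: w)
  case (Ex i p)
  have upd: "\<And>x. (w(s i := x)) \<circ> s = (w \<circ> s)(i := x)"
    using assms by (auto simp: fun_eq_iff inj_eq)
  show ?case by (simp only: ren.simps sat.simps Ex.IH upd)
qed (auto simp: eval_ren_tm)

lemma sat_at_conj:
  assumes "ring_fm p1" "ring_fm p2" "\<forall>i. v1 i \<in> K" "\<forall>i. v2 i \<in> K" "0 \<in> K"
  shows "\<exists>p v. ring_fm p \<and> (\<forall>i. v i \<in> K) \<and>
    (\<forall>c. sat_at d n p v c \<longleftrightarrow> sat_at d n p1 v1 c \<and> sat_at d n p2 v2 c)"
proof -
  text \<open>Interleave the two parameter tuples above position \<open>n\<close>.\<close>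
  define s1 where "s1 = (\<lambda>i::nat. if i < n then i else n + 2 * (i - n))"
  define s2 where "s2 = (\<lambda>i::nat. if i < n then i else n + 2 * (i - n) + 1)"
  define v where "v = (\<lambda>j. if j < n then 0 else if even (j - n) then v1 (n + (j - n) div 2)
       else v2 (n + (j - n) div 2))"
  have "inj s1" "inj s2" unfolding s1_def s2_def inj_def by auto
  moreover have "(\<lambda>i. if i < n then c i else v i) \<circ> s1 = (\<lambda>i. if i < n then c i else v1 i)"
    and "(\<lambda>i. if i < n then c i else v i) \<circ> s2 = (\<lambda>i. if i < n then c i else v2 i)" for c
    by (auto simp: fun_eq_iff s1_def s2_def v_def)
  moreover have "\<forall>i. v i \<in> K" using assms unfolding v_def by auto
  ultimately show ?thesis using assms
    by (intro exI[of _ "Conj (ren s1 p1) (ren s2 p2)"] exI[of _ v]) (simp add: ring_fm_ren sat_ren)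
qed

lemma sat_at_finite_conj:
  assumes "finite F" "\<forall>(p, v)\<in>F. ring_fm p \<and> (\<forall>i. v i \<in> K)" "0 \<in> K"
  shows "\<exists>q w. ring_fm q \<and> (\<forall>i. w i \<in> K) \<and>
    (\<forall>c. sat_at d n q w c \<longleftrightarrow> (\<forall>(p, v)\<in>F. sat_at d n p v c))"
  using assms
proof (induction F rule: finite_induct)
  case empty
  then show ?case by (intro exI[of _ "Eq Zero Zero"] exI[of _ "\<lambda>_. 0"]) auto
next
  case (insert pv F)
  obtain q w where "ring_fm q" "\<forall>i. w i \<in> K"
    and qw: "\<forall>c. sat_at d n q w c \<longleftrightarrow> (\<forall>(p, v)\<in>F. sat_at d n p v c)"
    using insert by auto
  moreover have "ring_fm (fst pv)" "\<forall>i. snd pv i \<in> K"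
    using insert.prems by (auto simp: case_prod_beta)
  ultimately obtain q' w' where "ring_fm q'" "\<forall>i. w' i \<in> K"
    "\<forall>c. sat_at d n q' w' c \<longleftrightarrow> sat_at d n (fst pv) (snd pv) c \<and> sat_at d n q w c"
    using sat_at_conj[of "fst pv" q "snd pv" K w d n] insert.prems by blast
  with qw show ?case by (auto simp: case_prod_beta)
qed

fun der_iter :: "nat \<Rightarrow> tm \<Rightarrow> tm" where
  "der_iter 0 t = t"
| "der_iter (Suc k) t = Der (der_iter k t)"

lemma eval_der_iter: "eval d w (der_iter k t) = (d ^^ k) (eval d w t)"
  by (induction k) auto

fun bind_jet :: "nat \<Rightarrow> fm \<Rightarrow> fm" where
  "bind_jet 0 q = q"
| "bind_jet (Suc k) q = Ex (Suc k) (Conj (Eq (Var (Suc k)) (der_iter k (Var 0))) (bind_jet k q))"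

lemma sat_bind_jet:
  "sat d UNIV (bind_jet k q) w =
   sat d UNIV q (\<lambda>i. if 1 \<le> i \<and> i \<le> k then (d ^^ (i - 1)) (w 0) else w i)"
proof (induction k arbitrary: w)
  case 0
  have "(\<lambda>i. if 1 \<le> i \<and> i \<le> (0::nat) then (d ^^ (i - 1)) (w 0) else w i) = w" by auto
  then show ?case by simp
next
  case (Suc k)
  have "(\<lambda>i. if 1 \<le> i \<and> i \<le> k then (d ^^ (i - 1)) ((w(Suc k := (d ^^ k) (w 0))) 0)
        else (w(Suc k := (d ^^ k) (w 0))) i)
     = (\<lambda>i. if 1 \<le> i \<and> i \<le> Suc k then (d ^^ (i - 1)) (w 0) else w i)"
    by (auto simp: fun_eq_iff)
  with Suc show ?case by (simp add: eval_der_iter)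
qed

text \<open>\<open>jet_fm n p\<close> speaks about the single variable 0, with the parameters of \<open>p\<close> shifted
  up by one; the \<open>n\<close>-tuple variables of \<open>p\<close> are existentially bound to the derivatives
  \<open>\<delta>\<^sup>i(x\<^sub>0)\<close>, \<open>i < n\<close>.\<close>

definition jet_fm :: "nat \<Rightarrow> fm \<Rightarrow> fm" where
  "jet_fm n p = bind_jet n (ren Suc p)"

lemma sat_jet_fm: "sat d UNIV (jet_fm n p) (case_nat b v) = sat_at d n p v (jet d b)"
proof -
  have "(\<lambda>i. if 1 \<le> i \<and> i \<le> n then (d ^^ (i - 1)) (case_nat b v 0) else case_nat b v i) \<circ> Suc
     = (\<lambda>i. if i < n then jet d b i else v i)"
    by (auto simp: fun_eq_iff jet_def)
  then show ?thesis by (simp only: jet_fm_def sat_bind_jet sat_ren[OF inj_Suc])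
qed

lemma CODF_derivation: "CODF d \<Longrightarrow> derivation d"
  unfolding CODF_def by blast

lemma derivation_zero:
  assumes "derivation d"
  shows "d 0 = 0"
proof -
  have "d (0 + 0) = d 0 + d 0" using assms unfolding derivation_def by blast
  then show ?thesis by simp
qed

lemma funpow_derivation_zero: "derivation d \<Longrightarrow> (d ^^ k) 0 = 0"
  by (induction k) (simp_all add: derivation_zero)

lemma funpow_derivation_vanishes_ge:
  assumes "derivation d" "(d ^^ n) b = 0" "n \<le> k"
  shows "(d ^^ k) b = 0"
proof -
  have "d ^^ k = d ^^ (k - n) \<circ> d ^^ n"
    using funpow_add[of "k - n" n d] assms(3) by simp
  then show ?thesis using assms(2) funpow_derivation_zero[OF assms(1)] by simp
qed

text \<open>The axiom scheme for \<open>f = x\<^sub>n\<close>, whose partial derivative in \<open>x\<^sub>n\<close> is \<open>1\<close>.\<close>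

lemma CODF_vanishing_solution:
  assumes "CODF d" and gs: "\<forall>g\<in>set gs. ring_tm g \<and> n \<notin> tm_vars g"
    and "\<forall>g\<in>set gs. eval d (\<lambda>i. if i \<le> n then a i else c i) g > 0"
  shows "\<exists>y. (d ^^ n) y = 0 \<and> (\<forall>g\<in>set gs. eval d (\<lambda>i. if i \<le> n then (d ^^ i) y else c i) g > 0)"
proof -
  have eval_upd: "eval d (\<lambda>i. if i \<le> n then (a(n := 0)) i else c i) g
    = eval d (\<lambda>i. if i \<le> n then a i else c i) g" if "n \<notin> tm_vars g" for g
    using that by (induction g) auto
  have "\<exists>a. let w = (\<lambda>i. if i \<le> n then a i else c i) in
      eval d w (Var n) = 0 \<and> eval d w (pderiv_tm n (Var n)) \<noteq> 0 \<and> (\<forall>g\<in>set gs. eval d w g > 0)"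
    using assms by (intro exI[of _ "a(n := 0)"]) (simp add: Let_def eval_upd)
  moreover have "ring_tm (Var n)" by simp
  ultimately obtain y where "let w = (\<lambda>i. if i \<le> n then (d ^^ i) y else c i) in
      eval d w (Var n) = 0 \<and> (\<forall>g\<in>set gs. eval d w g > 0)"
    using assms(1) gs unfolding CODF_def by blast
  then show ?thesis by (auto simp: Let_def)
qed

lemma CODF_jet_in_box:
  fixes d :: "'a::linordered_field \<Rightarrow> 'a"
  assumes "CODF d" and lu: "\<forall>j<n. l j < u j"
  shows "\<exists>y. (d ^^ n) y = 0 \<and> (\<forall>j<n. l j < (d ^^ j) y \<and> (d ^^ j) y < u j)"
proof -
  text \<open>Without subtraction, \<open>x\<^sub>j - l\<^sub>j\<close> and \<open>u\<^sub>j - x\<^sub>j\<close> are written with the parameters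
    \<open>-1\<close> at \<open>n + 1\<close>, \<open>-l\<^sub>j\<close> at \<open>n + 2 + 2j\<close> and \<open>u\<^sub>j\<close> at \<open>n + 3 + 2j\<close>.\<close>
  define lower where "lower = (\<lambda>j. Add (Var j) (Var (n + 2 + 2 * j)))"
  define upper where "upper = (\<lambda>j. Add (Var (n + 3 + 2 * j)) (Mul (Var (n + 1)) (Var j)))"
  define gs where "gs = map lower [0..<n] @ map upper [0..<n]"
  define c where "c = (\<lambda>i. if i = n + 1 then - 1 else if even (i - n) then - l ((i - n - 2) div 2)
      else u ((i - n - 3) div 2))"
  have eval_bounds: "eval d W (lower j) = W j - l j \<and> eval d W (upper j) = u j - W j"
    if "\<forall>i>n. W i = c i" for W j
    using that unfolding lower_def upper_def by (simp add: c_def)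
  have gs_ring: "\<forall>g\<in>set gs. ring_tm g \<and> n \<notin> tm_vars g"
    unfolding gs_def lower_def upper_def by auto
  have mid: "l j < (l j + u j) / 2 \<and> (l j + u j) / 2 < u j" if "j < n" for j
    using lu that by (simp add: field_simps)
  have "\<forall>g\<in>set gs. eval d (\<lambda>i. if i \<le> n then (l i + u i) / 2 else c i) g > 0"
    using mid eval_bounds[of "\<lambda>i. if i \<le> n then (l i + u i) / 2 else c i"]
    by (auto simp: gs_def)
  then obtain y where y: "(d ^^ n) y = 0"
    and pos: "\<forall>g\<in>set gs. eval d (\<lambda>i. if i \<le> n then (d ^^ i) y else c i) g > 0"
    using CODF_vanishing_solution[OF assms(1) gs_ring, where a = "\<lambda>i. (l i + u i) / 2"] by blast
  have "l j < (d ^^ j) y \<and> (d ^^ j) y < u j" if "j < n" for j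
  proof -
    have "lower j \<in> set gs" "upper j \<in> set gs" using that by (auto simp: gs_def)
    then have "0 < (d ^^ j) y - l j" "0 < u j - (d ^^ j) y"
      using that pos eval_bounds[of "\<lambda>i. if i \<le> n then (d ^^ i) y else c i" j] by auto
    then show ?thesis by simp
  qed
  with y show ?thesis by blast
qed

lemma has_dim_ge_sa_dim:
  assumes "c \<in> Y"
  shows "sa_dim n Y \<le> n \<and> has_dim_ge n Y (sa_dim n Y)"
proof -
  have "has_dim_ge n Y 0" using assms unfolding has_dim_ge_def by (intro exI[of _ "{}"]) auto
  then have "{k. k \<le> n \<and> has_dim_ge n Y k} \<noteq> {}" by auto
  then show ?thesis unfolding sa_dim_def using Max_in[of "{k. k \<le> n \<and> has_dim_ge n Y k}"] by auto
qed

lemma has_dim_ge_if_tp_dim: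
  assumes "tp_dim d K n c = n" "sa_def d K n X" "c \<in> X"
  shows "has_dim_ge n X n"
proof -
  define D where "D = {sa_dim n Y | Y. sa_def d K n Y \<and> c \<in> Y}"
  have "finite D"
    by (rule finite_subset[of _ "{..n}"]) (auto simp: D_def dest: has_dim_ge_sa_dim)
  moreover have "sa_dim n X \<in> D" using assms(2,3) unfolding D_def by blast
  ultimately have "Min D \<le> sa_dim n X" by (rule Min_le)
  moreover have "Min D = n" using assms(1) unfolding tp_dim_def D_def .
  ultimately have "n \<le> sa_dim n X" by simp
  with has_dim_ge_sa_dim[OF assms(3), of n] have "sa_dim n X = n" by simp
  with has_dim_ge_sa_dim[OF assms(3), of n] show ?thesis by simp
qed

lemma has_dim_ge_full_box:
  assumes "has_dim_ge n X n"
  shows "\<exists>l u. (\<forall>j<n. l j < u j) \<and>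
    (\<forall>y. (\<forall>j<n. l j < y j \<and> y j < u j) \<longrightarrow> (\<exists>c\<in>X. \<forall>j<n. c j = y j))"
proof -
  obtain J where "J \<subseteq> {..<n}" "card J = n" and box: "\<exists>l u. (\<forall>j\<in>J. l j < u j) \<and>
      (\<forall>y. (\<forall>j\<in>J. l j < y j \<and> y j < u j) \<longrightarrow> (\<exists>c\<in>X. \<forall>j\<in>J. c j = y j))"
    using assms unfolding has_dim_ge_def by blast
  then have "J = {..<n}" by (simp add: card_subset_eq)
  with box show ?thesis by (simp only: lessThan_iff Ball_def)
qed

lemma full_dim_type_has_vanishing_jet:
  fixes d :: "'a::linordered_field \<Rightarrow> 'a"
  assumes "CODF d" "tp_dim d K n (jet d a) = n"
    and "ring_fm p" "\<forall>i. v i \<in> K" "sat_at d n p v (jet d a)"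
  shows "\<exists>b. (d ^^ n) b = 0 \<and> sat_at d n p v (jet d b)"
proof -
  define X where "X = {c. sat_at d n p v c}"
  have "sa_def d K n X" unfolding sa_def_def X_def using assms(3,4) by blast
  moreover have "jet d a \<in> X" unfolding X_def using assms(5) by simp
  ultimately have "has_dim_ge n X n" using has_dim_ge_if_tp_dim assms(2) by blast
  then obtain l u where "\<forall>j<n. l j < u j"
    and box: "\<forall>y. (\<forall>j<n. l j < y j \<and> y j < u j) \<longrightarrow> (\<exists>c\<in>X. \<forall>j<n. c j = y j)"
    using has_dim_ge_full_box by blast
  then obtain y where y: "(d ^^ n) y = 0" "\<forall>j<n. l j < jet d y j \<and> jet d y j < u j"
    using CODF_jet_in_box[OF assms(1)] unfolding jet_def by blast
  then obtain c where "c \<in> X" "\<forall>j<n. c j = jet d y j"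
    using box by blast
  then have "sat_at d n p v (jet d y)"
    unfolding X_def by (auto cong: if_cong)
  with y show ?thesis by blast
qed

definition ring_tp :: "('a::linordered_field \<Rightarrow> 'a) \<Rightarrow> 'a set \<Rightarrow> nat \<Rightarrow> (nat \<Rightarrow> 'a) \<Rightarrow> (fm \<times> (nat \<Rightarrow> 'a)) set" where
  "ring_tp d K n c = {(p, v). ring_fm p \<and> (\<forall>i. v i \<in> K) \<and> sat_at d n p v c}"

lemma tp_eq_if_ring_tp_subset:
  assumes "ring_tp d K n e \<subseteq> ring_tp d K n c"
  shows "tp_eq d K n c e"
  unfolding tp_eq_def
proof (intro allI impI)
  fix p and v :: "nat \<Rightarrow> 'a" assume pv: "ring_fm p \<and> (\<forall>i. v i \<in> K)"
  have "sat_at d n q v e \<Longrightarrow> sat_at d n q v c" if "ring_fm q" for q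
    using assms pv that unfolding ring_tp_def by blast
  from this[of p] this[of "Neg p"] show "sat_at d n p v c \<longleftrightarrow> sat_at d n p v e"
    using pv by auto
qed

lemma finite_ring_tp_has_vanishing_jet:
  fixes d :: "'a::linordered_field \<Rightarrow> 'a"
  assumes "CODF d" "tp_dim d K n (jet d a) = n" "0 \<in> K"
    and "finite G" "G \<subseteq> ring_tp d K n (jet d a)"
  shows "\<exists>b. (d ^^ n) b = 0 \<and> (\<forall>(p, v)\<in>G. sat_at d n p v (jet d b))"
proof -
  have "\<forall>(p, v)\<in>G. ring_fm p \<and> (\<forall>i. v i \<in> K)" using assms(5) unfolding ring_tp_def by auto
  then obtain q w where "ring_fm q" "\<forall>i. w i \<in> K"
    and qw: "\<forall>c. sat_at d n q w c \<longleftrightarrow> (\<forall>(p, v)\<in>G. sat_at d n p v c)"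
    using sat_at_finite_conj[OF assms(4) _ assms(3)] by blast
  moreover have "sat_at d n q w (jet d a)" using qw assms(5) unfolding ring_tp_def by auto
  ultimately show ?thesis using full_dim_type_has_vanishing_jet[OF assms(1,2)] qw by blast
qed

lemma saturated_realizes_vanishing_jet:
  fixes d :: "'a::linordered_field \<Rightarrow> 'a" and kappa :: "'k rel"
  assumes "saturated d kappa" "small kappa K" "0 \<in> K"
    and params: "\<forall>(p, v)\<in>T. \<forall>i. v i \<in> K"
    and finsat: "\<And>G. finite G \<Longrightarrow> G \<subseteq> T \<Longrightarrow>
      \<exists>b. (d ^^ n) b = 0 \<and> (\<forall>(p, v)\<in>G. sat_at d n p v (jet d b))"
  shows "\<exists>b. (d ^^ n) b = 0 \<and> (\<forall>(p, v)\<in>T. sat_at d n p v (jet d b))"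
proof -
  define vanish where "vanish = (Eq (der_iter n (Var 0)) Zero, \<lambda>_::nat. 0::'a)"
  define f where "f = (\<lambda>(p, v). (jet_fm n p, case_nat (0::'a) v))"
  have realize: "(\<forall>(q, w)\<in>insert vanish (f ` G). sat d UNIV q (w(0 := b))) \<longleftrightarrow>
      (d ^^ n) b = 0 \<and> (\<forall>(p, v)\<in>G. sat_at d n p v (jet d b))" for G b
  proof -
    have "(case_nat 0 v)(0 := b) = case_nat b v" for v :: "nat \<Rightarrow> 'a"
      by (auto simp: fun_eq_iff split: nat.split)
    then have "(\<forall>(q, w)\<in>f ` G. sat d UNIV q (w(0 := b))) \<longleftrightarrow> (\<forall>(p, v)\<in>G. sat_at d n p v (jet d b))"
      by (simp add: f_def sat_jet_fm split_beta)
    moreover have "sat d UNIV (fst vanish) ((snd vanish)(0 := b)) \<longleftrightarrow> (d ^^ n) b = 0"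
      by (simp add: vanish_def eval_der_iter)
    ultimately show ?thesis by (simp add: split_beta)
  qed
  let ?\<Sigma> = "insert vanish (f ` T)"
  have \<Sigma>_params: "\<forall>(q, w)\<in>?\<Sigma>. \<forall>i. i \<noteq> 0 \<longrightarrow> w i \<in> K"
    using params assms(3) by (auto simp: vanish_def f_def split: nat.split)
  have \<Sigma>_finsat: "\<exists>b. \<forall>(q, w)\<in>F. sat d UNIV q (w(0 := b))" if "finite F" "F \<subseteq> ?\<Sigma>" for F
  proof -
    have "finite (F - {vanish})" "F - {vanish} \<subseteq> f ` T" using that by auto
    then obtain G where "G \<subseteq> T" "finite G" "F - {vanish} = f ` G"
      using finite_subset_image by metis
    then have F: "F \<subseteq> insert vanish (f ` G)" by auto
    obtain b where "(d ^^ n) b = 0 \<and> (\<forall>(p, v)\<in>G. sat_at d n p v (jet d b))"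
      using finsat[OF \<open>finite G\<close> \<open>G \<subseteq> T\<close>] by blast
    then have "\<forall>(q, w)\<in>insert vanish (f ` G). sat d UNIV q (w(0 := b))"
      using realize[of G b] by blast
    with F show ?thesis by blast
  qed
  obtain b where "\<forall>(q, w)\<in>?\<Sigma>. sat d UNIV q (w(0 := b))"
    using assms(1)[unfolded saturated_def, rule_format, of K ?\<Sigma>] assms(2)[unfolded small_def]
      \<Sigma>_params \<Sigma>_finsat by blast
  then show ?thesis using realize[of T b] by blast
qed

theorem lemma2p5:
  fixes d :: "'a::linordered_field \<Rightarrow> 'a" and kappa :: "'k rel"
    and K :: "'a set" and a :: 'a and n :: nat
  assumes "CODF d"
    and "monster d kappa"
    and "small kappa K"
    and "elem_sub d K"
    and "tp_dim d K n (jet d a) = n"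
  shows "\<exists>b. tp_eq d K n (jet d b) (jet d a) \<and> (\<forall>k\<ge>n. (d ^^ k) b = 0)"
proof -
  have K0: "0 \<in> K" using assms(4) unfolding elem_sub_def by (rule conjunct1)
  have sat: "saturated d kappa" using assms(2) unfolding monster_def by simp
  have "\<forall>(p, v)\<in>ring_tp d K n (jet d a). \<forall>i. v i \<in> K"
    unfolding ring_tp_def by blast
  then obtain b where bn: "(d ^^ n) b = 0"
    and "\<forall>(p, v)\<in>ring_tp d K n (jet d a). sat_at d n p v (jet d b)"
    using saturated_realizes_vanishing_jet[OF sat assms(3) K0 _
        finite_ring_tp_has_vanishing_jet[OF assms(1,5) K0]]
    by blast
  then have "tp_eq d K n (jet d b) (jet d a)"
    by (intro tp_eq_if_ring_tp_subset) (auto simp: ring_tp_def)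
  moreover have "\<forall>k\<ge>n. (d ^^ k) b = 0"
    using funpow_derivation_vanishes_ge[OF CODF_derivation[OF assms(1)] bn] by blast
  ultimately show ?thesis by blast
qed

end
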